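(* Let $V$ be a vector configuration with $\mathrm{DD}(V)>0$. Then there is a subconfiguration $W\subseteq V$ of rank $1$ with $\operatorname{lin}(W)\cap V=W$ and $\mathrm{DD}(W)>0$ such that $\mathrm{DD}(V)=\mathrm{DD}(W)+\mathrm{DD}(V/W)$.
   Context: A vector configuration is a finite family (repetitions allowed) $U$ of vectors in a real vector space $E$; a subconfiguration is a subfamily, $\operatorname{rank}(U)=\dim\operatorname{lin}(U)$, cardinalities count multiplicities; $\operatorname{lin}(W)\cap V=W$ means the elements of $V$ lying in $\operatorname{lin}(W)$ are exactly those of $W$. The quotient $V/W$ is the configuration in $E/\operatorname{lin}(W)$ of the images of the elements of $V\setminus W$. Covector discrepancy: $\mathrm{DD}(U)=\max_f\big|\,|\{u\in U: f(u)>0\}|-|\{u\in U:f(u)<0\}|\,\big|$ over all linear functionals $f$ on $E$. *)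

theory Defs
  imports "HOL-Analysis.Analysis"
begin

text \<open>A vector configuration is a finite family: a finite index set I together with
  v :: 'i => 'a, so repetitions are allowed. A subconfiguration is given by J \<subseteq> I.\<close>

definition imbalance :: "'i set \<Rightarrow> ('i \<Rightarrow> 'a) \<Rightarrow> ('a \<Rightarrow> real) \<Rightarrow> int" where
  "imbalance I v f = \<bar>int (card {i\<in>I. f (v i) > 0}) - int (card {i\<in>I. f (v i) < 0})\<bar>"

definition DD :: "'i set \<Rightarrow> ('i \<Rightarrow> 'a::real_vector) \<Rightarrow> int" where
  "DD I v = Max {imbalance I v f | f. linear f}"

definition config_rank :: "'i set \<Rightarrow> ('i \<Rightarrow> 'a::real_vector) \<Rightarrow> nat" where
  "config_rank I v = dim (span (v ` I))"

text \<open>DD of the quotient V/W: the configuration of images of the elements of V \ W in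
  E / lin(W). Linear functionals on E / lin(W) are exactly the linear functionals on E
  vanishing on lin(W) (composed with the projection), and the sign of g at the image of u
  equals the sign of g o pi at u.\<close>
definition DD_quot :: "'i set \<Rightarrow> ('i \<Rightarrow> 'a::real_vector) \<Rightarrow> 'i set \<Rightarrow> int" where
  "DD_quot I v J = Max {imbalance (I - J) v f | f. linear f \<and> (\<forall>x\<in>span (v ` J). f x = 0)}"

end

theory Submission
  imports Defs
begin

text \<open>Write s_f(U) = signed_sum U v f for the sum of the signs of f on U, so DD(U) = max_f |s_f(U)|.

  For every flat W of V, DD(W) + DD(V/W) \<le> DD(V): if k is optimal for W, g is optimal for V/W
  and F vanishes on lin(W) but nowhere else on V, then for small \<epsilon>, \<delta> > 0 the signs of
  g + \<epsilon>(F + \<delta> k) are those of g where g is nonzero, those of F at the other vectors off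
  W, and those of k on W; choosing the sign of F makes the middle contribution nonnegative.

  Conversely, take an optimal f that is nonzero on every nonzero vector of V and a generic p,
  and order the lines spanned by V by the slope p/f. Let W be the first line with positive
  signed sum and c its slope. The functional p - c f vanishes on W and differs in sign from f
  exactly on the lines of smaller slope, whose total signed sum is \<le> 0, so
  DD(V/W) \<ge> s_f(V) - s_f(W) \<ge> DD(V) - DD(W), with DD(W) \<ge> s_f(W) > 0.\<close>

definition int_sgn :: "real \<Rightarrow> int" where
  "int_sgn x = of_bool (0 < x) - of_bool (x < 0)"

definition signed_sum :: "'i set \<Rightarrow> ('i \<Rightarrow> 'a) \<Rightarrow> ('a \<Rightarrow> real) \<Rightarrow> int" where
  "signed_sum K v f = (\<Sum>i\<in>K. int_sgn (f (v i)))"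

lemma int_sgn_eq_0_iff [simp]: "int_sgn x = 0 \<longleftrightarrow> x = 0"
  by (auto simp: int_sgn_def)

lemma int_sgn_uminus: "int_sgn (- x) = - int_sgn x"
  by (auto simp: int_sgn_def)

lemma int_sgn_mult: "int_sgn (x * y) = int_sgn x * int_sgn y"
  by (auto simp: int_sgn_def zero_less_mult_iff mult_less_0_iff)

lemma imbalance_eq_abs_signed_sum:
  "finite K \<Longrightarrow> imbalance K v f = \<bar>signed_sum K v f\<bar>"
  by (simp add: imbalance_def signed_sum_def int_sgn_def sum_subtractf Int_def conj_commute)

lemma signed_sum_uminus: "signed_sum K v (\<lambda>x. - f x) = - signed_sum K v f"
  by (simp add: signed_sum_def int_sgn_uminus sum_negf)

lemma ex_sign_flip_signed_sum_abs: "\<exists>g\<in>{f, \<lambda>x. - f x}. signed_sum K v g = \<bar>signed_sum K v f\<bar>"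
  by (cases "0 \<le> signed_sum K v f") (auto simp: signed_sum_uminus)

lemma signed_sum_split:
  "finite I \<Longrightarrow> J \<subseteq> I \<Longrightarrow> signed_sum I v f = signed_sum J v f + signed_sum (I - J) v f"
  by (simp add: signed_sum_def sum.subset_diff)

lemma signed_sum_eq_0: "\<forall>i\<in>K. f (v i) = 0 \<Longrightarrow> signed_sum K v f = 0"
  by (simp add: signed_sum_def)

lemma linear_add_mult: "linear F \<Longrightarrow> linear G \<Longrightarrow> linear (\<lambda>x. F x + c * G x :: real)"
  using linear_compose_add[OF _ linear_compose_scale_right[of G c]] by simp

lemma finite_imbalances: "finite K \<Longrightarrow> finite {imbalance K v f | f. P f}"
proof (rule finite_subset[of _ "{0..int (card K)}"])
  assume K: "finite K"
  show "{imbalance K v f | f. P f} \<subseteq> {0..int (card K)}"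
  proof
    fix n assume "n \<in> {imbalance K v f | f. P f}"
    then obtain f where n: "n = imbalance K v f" by blast
    have "card {i\<in>K. 0 < f (v i)} \<le> card K" "card {i\<in>K. f (v i) < 0} \<le> card K"
      using K by (auto intro: card_mono)
    then show "n \<in> {0..int (card K)}"
      unfolding n imbalance_def by simp
  qed
qed simp

lemma imbalance_le_Max: "finite K \<Longrightarrow> P f \<Longrightarrow> imbalance K v f \<le> Max {imbalance K v f | f. P f}"
  by (rule Max_ge[OF finite_imbalances]) blast+

lemma Max_imbalance_attained_signed:
  assumes "finite K" "P (\<lambda>x. 0)" "\<And>f. P f \<Longrightarrow> P (\<lambda>x. - f x)"
  obtains f where "P f" "signed_sum K v f = Max {imbalance K v f | f. P f}"
proof -
  have "finite {imbalance K v f | f. P f}"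
    using assms(1) by (rule finite_imbalances)
  moreover have "{imbalance K v f | f. P f} \<noteq> {}"
    using assms(2) by blast
  ultimately obtain f where "P f" "Max {imbalance K v f | f. P f} = imbalance K v f"
    using Max_in by blast
  moreover obtain g where "g \<in> {f, \<lambda>x. - f x}" "signed_sum K v g = \<bar>signed_sum K v f\<bar>"
    using ex_sign_flip_signed_sum_abs by blast
  ultimately have "P g" "signed_sum K v g = Max {imbalance K v f | f. P f}"
    using assms(3) by (auto simp: imbalance_eq_abs_signed_sum[OF assms(1)])
  then show thesis
    by (rule that)
qed

lemma signed_sum_le_DD: "finite I \<Longrightarrow> linear f \<Longrightarrow> signed_sum I v f \<le> DD I v"
  using imbalance_le_Max[of I linear f v] by (simp add: DD_def imbalance_eq_abs_signed_sum)

lemma DD_attained: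
  assumes "finite I"
  obtains f where "linear f" "signed_sum I v f = DD I v"
  by (rule Max_imbalance_attained_signed[OF assms, of linear v])
    (auto simp: DD_def linear_zero linear_compose_neg intro: that)

lemma signed_sum_le_DD_quot:
  assumes "finite I" "linear f" "\<forall>x\<in>span (v ` J). f x = 0"
  shows "signed_sum (I - J) v f \<le> DD_quot I v J"
  using imbalance_le_Max[of "I - J" "\<lambda>f. linear f \<and> (\<forall>x\<in>span (v ` J). f x = 0)" f v] assms
  by (simp add: DD_quot_def imbalance_eq_abs_signed_sum)

lemma DD_quot_attained:
  assumes "finite I"
  obtains f where "linear f" "\<forall>x\<in>span (v ` J). f x = 0" "signed_sum (I - J) v f = DD_quot I v J"
  by (rule Max_imbalance_attained_signed[of "I - J" "\<lambda>f. linear f \<and> (\<forall>x\<in>span (v ` J). f x = 0)" v])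
    (auto simp: assms DD_quot_def linear_zero linear_compose_neg intro: that)

lemma ex_functional_vanishing_on_span:
  fixes x :: "'a::real_vector"
  assumes "x \<notin> span S"
  obtains F :: "'a \<Rightarrow> real" where "linear F" "\<forall>y\<in>span S. F y = 0" "F x = 1"
proof -
  obtain B where B: "B \<subseteq> S" "independent B" "S \<subseteq> span B"
    by (rule real_vector.maximal_independent_subset)
  have "span B = span S"
    using span_mono[OF B(1)] span_minimal[OF B(3) subspace_span] by (rule antisym)
  then have "independent (insert x B)"
    using B(2) assms by (simp add: real_vector.independent_insert)
  from real_vector.linear_independent_extend[OF this, of "\<lambda>y. if y = x then 1 else 0"]
  obtain F :: "'a \<Rightarrow> real" where F: "linear F" "\<forall>y\<in>insert x B. F y = (if y = x then 1 else 0)"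
    by blast
  have "x \<notin> B"
    using assms B(1) span_base[of x S] by auto
  show thesis
  proof (rule that[OF F(1)])
    show "F x = 1"
      using F(2) by simp
    have "F b = 0" if "b \<in> B" for b
      using F(2) \<open>x \<notin> B\<close> that by auto
    then show "\<forall>y\<in>span S. F y = 0"
      using linear_eq_0_on_span[OF F(1)] \<open>span B = span S\<close> by blast
  qed
qed

lemma ex_functional_nonvanishing_on_finite:
  fixes X :: "'a::real_vector set"
  assumes "finite X" "X \<inter> span S = {}"
  obtains F :: "'a \<Rightarrow> real" where "linear F" "\<forall>y\<in>span S. F y = 0" "\<forall>x\<in>X. F x \<noteq> 0"
  using assms
proof (induction X arbitrary: thesis rule: finite_induct)
  case empty
  show ?case by (rule empty(1)[of "\<lambda>x. 0"]) (simp_all add: linear_zero)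
next
  case (insert x X)
  have "X \<inter> span S = {}" and "x \<notin> span S"
    using insert.prems(2) by auto
  obtain F :: "'a \<Rightarrow> real" where F: "linear F" "\<forall>y\<in>span S. F y = 0" "\<forall>y\<in>X. F y \<noteq> 0"
    by (rule insert.IH[OF _ \<open>X \<inter> span S = {}\<close>])
  obtain G :: "'a \<Rightarrow> real" where G: "linear G" "\<forall>y\<in>span S. G y = 0" "G x = 1"
    by (rule ex_functional_vanishing_on_span[OF \<open>x \<notin> span S\<close>])
  \<comment> \<open>F + c G vanishes at y only if c = - F y / G y, which excludes finitely many c\<close>
  have "finite ((\<lambda>y. - F y / G y) ` insert x X)"
    using insert.hyps(1) by simp
  from ex_new_if_finite[OF infinite_UNIV_char_0 this]
  obtain c :: real where c: "c \<notin> (\<lambda>y. - F y / G y) ` insert x X" ..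
  have "F y + c * G y \<noteq> 0" if "y \<in> insert x X" for y
  proof (cases "G y = 0")
    case True
    then show ?thesis using that F(3) G(3) by auto
  next
    case False
    have "c \<noteq> - F y / G y"
      using c that by blast
    then show ?thesis using False by (auto simp: field_simps)
  qed
  then show ?case
    using F(2) G(2) by (intro insert.prems(1)[OF linear_add_mult[OF F(1) G(1), of c]]) simp_all
qed

lemma eventually_int_sgn_perturbation:
  "\<forall>\<^sub>F \<epsilon> in at_right 0. int_sgn (a + \<epsilon> * b) = (if a = 0 then int_sgn b else int_sgn a)"
proof -
  have lim: "((\<lambda>\<epsilon>. a + \<epsilon> * b) \<longlongrightarrow> a) (at_right 0)"
    by (auto intro!: tendsto_eq_intros)
  consider "a = 0" | "0 < a" | "a < 0" by linarith
  then show ?thesis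
  proof cases
    case 1
    have "\<forall>\<^sub>F \<epsilon> in at_right (0::real). 0 < \<epsilon>"
      by (simp add: eventually_at_right_less)
    then show ?thesis
      by eventually_elim (auto simp: 1 int_sgn_def zero_less_mult_iff mult_less_0_iff)
  next
    case 2
    show ?thesis
      using order_tendstoD(1)[OF lim 2] by eventually_elim (use 2 in \<open>simp add: int_sgn_def\<close>)
  next
    case 3
    show ?thesis
      using order_tendstoD(2)[OF lim 3] by eventually_elim (use 3 in \<open>simp add: int_sgn_def\<close>)
  qed
qed

lemma ex_small_perturbation:
  assumes "finite X"
  obtains \<epsilon> :: real where "0 < \<epsilon>"
    "\<forall>x\<in>X. int_sgn (g x + \<epsilon> * k x) = (if g x = 0 then int_sgn (k x) else int_sgn (g x))"
proof -
  have "\<forall>\<^sub>F \<epsilon> in at_right 0. 0 < \<epsilon> \<and>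
      (\<forall>x\<in>X. int_sgn (g x + \<epsilon> * k x) = (if g x = 0 then int_sgn (k x) else int_sgn (g x)))"
    using assms by (intro eventually_conj eventually_ball_finite ballI eventually_int_sgn_perturbation)
      (simp_all add: eventually_at_right_less)
  then show thesis
    using that eventually_happens'[OF trivial_limit_at_right_real] by blast
qed

lemma small_perturbation_signed_sum:
  assumes "finite K"
  obtains \<epsilon> :: real where "0 < \<epsilon>"
    "\<forall>i\<in>K. int_sgn (g (v i) + \<epsilon> * k (v i)) =
      (if g (v i) = 0 then int_sgn (k (v i)) else int_sgn (g (v i)))"
    "signed_sum K v (\<lambda>x. g x + \<epsilon> * k x) = signed_sum K v g + signed_sum {i\<in>K. g (v i) = 0} v k"
proof -
  obtain \<epsilon> :: real where \<epsilon>: "0 < \<epsilon>"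
    "\<forall>x\<in>v ` K. int_sgn (g x + \<epsilon> * k x) = (if g x = 0 then int_sgn (k x) else int_sgn (g x))"
    by (rule ex_small_perturbation[OF finite_imageI[OF assms]])
  then have signs: "\<forall>i\<in>K. int_sgn (g (v i) + \<epsilon> * k (v i)) =
      (if g (v i) = 0 then int_sgn (k (v i)) else int_sgn (g (v i)))"
    by blast
  have "signed_sum K v (\<lambda>x. g x + \<epsilon> * k x) =
      (\<Sum>i\<in>K. int_sgn (g (v i)) + (if g (v i) = 0 then int_sgn (k (v i)) else 0))"
    unfolding signed_sum_def using signs by (intro sum.cong) auto
  also have "\<dots> = signed_sum K v g + signed_sum {i\<in>K. g (v i) = 0} v k"
    using assms by (simp add: signed_sum_def sum.distrib sum.inter_filter)
  finally show thesis
    by (rule that[OF \<epsilon>(1) signs])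
qed

lemma DD_attained_nonvanishing:
  fixes v :: "'i \<Rightarrow> 'a::real_vector"
  assumes "finite I"
  obtains f :: "'a \<Rightarrow> real"
  where "linear f" "signed_sum I v f = DD I v" "\<forall>i\<in>I. v i \<noteq> 0 \<longrightarrow> f (v i) \<noteq> 0"
proof -
  obtain f :: "'a \<Rightarrow> real" where f: "linear f" "signed_sum I v f = DD I v"
    by (rule DD_attained[OF assms])
  have "(v ` I - {0}) \<inter> span {} = {}"
    by simp
  then obtain q :: "'a \<Rightarrow> real" where q: "linear q" "\<forall>x\<in>v ` I - {0}. q x \<noteq> 0"
    by (rule ex_functional_nonvanishing_on_finite[OF finite_Diff[OF finite_imageI[OF assms]]])
  define Z where "Z = {i\<in>I. f (v i) = 0}"
  obtain \<epsilon> where \<epsilon>: "0 < \<epsilon>"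
    "\<forall>i\<in>I. int_sgn (f (v i) + \<epsilon> * q (v i)) = (if f (v i) = 0 then int_sgn (q (v i)) else int_sgn (f (v i)))"
    "signed_sum I v (\<lambda>x. f x + \<epsilon> * q x) = signed_sum I v f + signed_sum Z v q"
    unfolding Z_def by (rule small_perturbation_signed_sum[OF assms])
  obtain \<epsilon>' where "signed_sum I v (\<lambda>x. f x + \<epsilon>' * - q x) = signed_sum I v f + signed_sum Z v (\<lambda>x. - q x)"
    unfolding Z_def by (rule small_perturbation_signed_sum[OF assms])
  \<comment> \<open>neither perturbation beats f, so q has signed sum 0 on the zeros of f\<close>
  moreover have "signed_sum I v (\<lambda>x. f x + \<epsilon>' * - q x) \<le> DD I v"
    using linear_add_mult[OF f(1) linear_compose_neg[OF q(1)]] by (rule signed_sum_le_DD[OF assms])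
  moreover have "signed_sum I v (\<lambda>x. f x + \<epsilon> * q x) \<le> DD I v"
    using linear_add_mult[OF f(1) q(1)] by (rule signed_sum_le_DD[OF assms])
  ultimately have "signed_sum I v (\<lambda>x. f x + \<epsilon> * q x) = DD I v"
    using \<epsilon>(3) f(2) signed_sum_uminus[of Z v q] by linarith
  moreover have "f (v i) + \<epsilon> * q (v i) \<noteq> 0" if "i \<in> I" "v i \<noteq> 0" for i
    using \<epsilon>(2) q(2) that by (metis DiffI image_eqI singletonD int_sgn_eq_0_iff)
  ultimately show thesis
    using that[OF linear_add_mult[OF f(1) q(1)]] by blast
qed

lemma DD_plus_DD_quot_le:
  fixes v :: "'i \<Rightarrow> 'a::real_vector"
  assumes fin: "finite I" and flat: "{i\<in>I. v i \<in> span (v ` J)} = J"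
  shows "DD J v + DD_quot I v J \<le> DD I v"
proof -
  have "J \<subseteq> I"
    using flat by blast
  then have J: "J \<subseteq> I" "finite J"
    using finite_subset[OF _ fin] by auto
  have vanish_J: "F (v i) = 0" if "\<forall>x\<in>span (v ` J). F x = 0" "i \<in> J" for F :: "'a \<Rightarrow> real" and i
    using that by (simp add: span_base)
  obtain k where k: "linear k" "signed_sum J v k = DD J v"
    by (rule DD_attained[OF J(2)])
  obtain g where g: "linear g" "\<forall>x\<in>span (v ` J). g x = 0" "signed_sum (I - J) v g = DD_quot I v J"
    by (rule DD_quot_attained[OF fin])
  define Z where "Z = {i\<in>I. g (v i) = 0}"
  have "v ` (I - J) \<inter> span (v ` J) = {}"
    using flat by blast
  then obtain F0 :: "'a \<Rightarrow> real"
    where F0: "linear F0" "\<forall>x\<in>span (v ` J). F0 x = 0" "\<forall>x\<in>v ` (I - J). F0 x \<noteq> 0"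
    by (rule ex_functional_nonvanishing_on_finite[OF finite_imageI[OF finite_Diff[OF fin]]])
  obtain F where "F \<in> {F0, \<lambda>x. - F0 x}" "signed_sum Z v F = \<bar>signed_sum Z v F0\<bar>"
    using ex_sign_flip_signed_sum_abs by blast
  then have F: "linear F" "\<forall>x\<in>span (v ` J). F x = 0" "\<forall>i\<in>I - J. F (v i) \<noteq> 0" "0 \<le> signed_sum Z v F"
    using F0 linear_compose_neg[OF F0(1)] by auto
  have "{i\<in>Z. F (v i) = 0} = J"
    using F(3) vanish_J[OF F(2)] vanish_J[OF g(2)] J(1) by (auto simp: Z_def)
  moreover have "finite Z"
    using fin by (simp add: Z_def)
  then obtain \<delta> where
    "signed_sum Z v (\<lambda>x. F x + \<delta> * k x) = signed_sum Z v F + signed_sum {i\<in>Z. F (v i) = 0} v k"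
    by (rule small_perturbation_signed_sum)
  ultimately have m: "signed_sum Z v (\<lambda>x. F x + \<delta> * k x) = signed_sum Z v F + DD J v"
    using k(2) by simp
  define m where "m x = F x + \<delta> * k x" for x
  obtain \<epsilon> where "signed_sum I v (\<lambda>x. g x + \<epsilon> * m x) = signed_sum I v g + signed_sum Z v m"
    unfolding Z_def by (rule small_perturbation_signed_sum[OF fin])
  moreover have "signed_sum I v g = DD_quot I v J"
    using signed_sum_split[OF fin J(1), of v g] g(3) signed_sum_eq_0[of J g v] vanish_J[OF g(2)] by simp
  moreover have "signed_sum I v (\<lambda>x. g x + \<epsilon> * m x) \<le> DD I v"
    unfolding m_def by (intro signed_sum_le_DD[OF fin] linear_add_mult g(1) F(1) k(1))
  ultimately show ?thesis
    using m F(4) unfolding m_def by linarith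
qed

lemma ex_least_positive_level:
  fixes \<rho> :: "'i \<Rightarrow> 'b::linorder" and s :: "'i \<Rightarrow> int"
  assumes "finite U" "0 < (\<Sum>i\<in>U. s i)"
  obtains c where "0 < (\<Sum>i\<in>{i\<in>U. \<rho> i = c}. s i)" "(\<Sum>i\<in>{i\<in>U. \<rho> i < c}. s i) \<le> 0"
proof -
  define \<sigma> where "\<sigma> c = (\<Sum>i\<in>{i\<in>U. \<rho> i = c}. s i)" for c
  have by_levels: "(\<Sum>i\<in>{i\<in>U. P (\<rho> i)}. s i) = (\<Sum>c\<in>{c\<in>\<rho> ` U. P c}. \<sigma> c)" for P
  proof -
    have "(\<Sum>i\<in>{i\<in>U. P (\<rho> i)}. s i) = (\<Sum>c\<in>\<rho> ` {i\<in>U. P (\<rho> i)}. \<Sum>i\<in>{j\<in>{i\<in>U. P (\<rho> i)}. \<rho> j = c}. s i)"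
      using assms(1) by (intro sum.image_gen) simp
    also have "\<dots> = (\<Sum>c\<in>{c\<in>\<rho> ` U. P c}. \<sigma> c)"
      unfolding \<sigma>_def by (intro sum.cong) auto
    finally show ?thesis .
  qed
  define C where "C = {c\<in>\<rho> ` U. 0 < \<sigma> c}"
  have "finite C"
    using assms(1) by (simp add: C_def)
  have "C \<noteq> {}"
  proof
    assume "C = {}"
    then have "(\<Sum>c\<in>{c\<in>\<rho> ` U. True}. \<sigma> c) \<le> 0"
      by (intro sum_nonpos) (auto simp: C_def)
    then show False
      using assms(2) by_levels[of "\<lambda>_. True"] by simp
  qed
  define c where "c = Min C"
  have "c \<in> C"
    unfolding c_def using \<open>finite C\<close> \<open>C \<noteq> {}\<close> by (rule Min_in)
  moreover have below: "(\<Sum>i\<in>{i\<in>U. \<rho> i < c}. s i) \<le> 0"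
  proof -
    have "\<sigma> d \<le> 0" if "d \<in> \<rho> ` U" "d < c" for d
      using that Min_le[OF \<open>finite C\<close>] by (force simp: C_def c_def)
    then have "(\<Sum>d\<in>{d\<in>\<rho> ` U. d < c}. \<sigma> d) \<le> 0"
      by (intro sum_nonpos) auto
    then show ?thesis
      using by_levels[of "\<lambda>d. d < c"] by simp
  qed
  ultimately show thesis
    by (intro that[OF _ below]) (simp add: C_def \<sigma>_def)
qed

lemma ex_functional_separating_directions:
  fixes f :: "'a::real_vector \<Rightarrow> real"
  assumes "finite X" "linear f" "\<forall>x\<in>X. f x \<noteq> 0"
  obtains p :: "'a \<Rightarrow> real"
  where "linear p" "\<forall>x\<in>X. \<forall>y\<in>X. p x / f x = p y / f y \<longleftrightarrow> y \<in> span {x}"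
proof -
  define d where "d x y = (1 / f x) *\<^sub>R x - (1 / f y) *\<^sub>R y" for x y
  have "finite ((\<lambda>(x, y). d x y) ` (X \<times> X) - {0})" and "((\<lambda>(x, y). d x y) ` (X \<times> X) - {0}) \<inter> span {} = {}"
    using assms(1) by auto
  then obtain p :: "'a \<Rightarrow> real" where p: "linear p" "\<forall>z\<in>(\<lambda>(x, y). d x y) ` (X \<times> X) - {0}. p z \<noteq> 0"
    by (rule ex_functional_nonvanishing_on_finite)
  show thesis
  proof (rule that[OF p(1)], intro ballI)
    fix x y assume xy: "x \<in> X" "y \<in> X"
    have "p (d x y) = p x / f x - p y / f y"
      unfolding d_def by (simp add: linear_diff[OF p(1)] linear_scale[OF p(1)])
    show "p x / f x = p y / f y \<longleftrightarrow> y \<in> span {x}"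
    proof
      assume "p x / f x = p y / f y"
      then have "d x y = 0"
        using p(2) xy \<open>p (d x y) = _\<close> by force
      have "y = f y *\<^sub>R ((1 / f y) *\<^sub>R y)"
        using assms(3) xy by simp
      also have "\<dots> = f y *\<^sub>R ((1 / f x) *\<^sub>R x)"
        using \<open>d x y = 0\<close> by (simp add: d_def)
      finally show "y \<in> span {x}"
        by (metis span_base span_scale singletonI)
    next
      assume "y \<in> span {x}"
      then obtain a where a: "y = a *\<^sub>R x"
        by (auto simp: span_singleton)
      then have "f y = a * f x" "p y = a * p x"
        using linear_scale[OF assms(2)] linear_scale[OF p(1)] by auto
      moreover have "a \<noteq> 0"
        using \<open>f y = a * f x\<close> assms(3) xy by auto
      ultimately show "p x / f x = p y / f y"
        by simp
    qed
  qed
qed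

lemma signed_sum_le_sweep:
  assumes "finite K" "\<forall>i\<in>K. f (v i) \<noteq> 0 \<and> p (v i) / f (v i) \<noteq> c"
    and "(\<Sum>i\<in>{i\<in>K. p (v i) / f (v i) < c}. int_sgn (f (v i))) \<le> 0"
  shows "signed_sum K v f \<le> signed_sum K v (\<lambda>x. p x - c * f x)"
proof -
  let ?below = "\<lambda>i. p (v i) / f (v i) < c"
  have "int_sgn (p (v i) - c * f (v i)) = int_sgn (f (v i)) - 2 * (if ?below i then int_sgn (f (v i)) else 0)"
    if "i \<in> K" for i
  proof -
    have "p (v i) - c * f (v i) = f (v i) * (p (v i) / f (v i) - c)"
      using assms(2) that by (simp add: field_simps)
    moreover have "p (v i) / f (v i) \<noteq> c"
      using assms(2) that by blast
    then have "int_sgn (p (v i) / f (v i) - c) = (if ?below i then - 1 else 1)"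
      by (auto simp: int_sgn_def)
    ultimately show ?thesis
      by (simp add: int_sgn_mult)
  qed
  then have "signed_sum K v (\<lambda>x. p x - c * f x) =
      signed_sum K v f - 2 * (\<Sum>i\<in>{i\<in>K. ?below i}. int_sgn (f (v i)))"
    using assms(1) by (simp add: signed_sum_def sum_subtractf sum_distrib_left sum.inter_filter)
  then show ?thesis
    using assms(3) by linarith
qed

lemma DD_le_signed_sum_plus_DD_quot:
  fixes v :: "'i \<Rightarrow> 'a::real_vector"
  assumes fin: "finite I" and "J \<subseteq> I" and f: "linear f" "signed_sum I v f = DD I v"
    and p: "linear p" "\<forall>x\<in>span (v ` J). p x = c * f x"
    and "\<forall>i\<in>I - J. f (v i) \<noteq> 0 \<and> p (v i) / f (v i) \<noteq> c"
    and "(\<Sum>i\<in>{i\<in>I - J. p (v i) / f (v i) < c}. int_sgn (f (v i))) \<le> 0"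
  shows "DD I v \<le> signed_sum J v f + DD_quot I v J"
proof -
  have h: "linear (\<lambda>x. p x - c * f x)"
    using linear_compose_sub[OF p(1) linear_compose_scale_right[OF f(1)]] by simp
  have "signed_sum (I - J) v f \<le> signed_sum (I - J) v (\<lambda>x. p x - c * f x)"
    using fin assms(7,8) by (intro signed_sum_le_sweep) auto
  also have "\<dots> \<le> DD_quot I v J"
    using p(2) by (intro signed_sum_le_DD_quot[OF fin h]) simp
  finally show ?thesis
    using signed_sum_split[OF fin \<open>J \<subseteq> I\<close>, of v f] f(2) by linarith
qed

lemma signed_sum_nonzero_vectors:
  "finite K \<Longrightarrow> linear f \<Longrightarrow> signed_sum K v f = signed_sum {i\<in>K. v i \<noteq> 0} v f"
  unfolding signed_sum_def by (rule sum.mono_neutral_right) (auto simp: linear_0)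

lemma span_image_line:
  assumes "w \<in> v ` I"
  shows "span (v ` {i\<in>I. v i \<in> span {w}}) = span {w}"
proof
  show "span (v ` {i\<in>I. v i \<in> span {w}}) \<subseteq> span {w}"
    by (rule span_minimal) (auto simp: subspace_span)
  show "span {w} \<subseteq> span (v ` {i\<in>I. v i \<in> span {w}})"
    using assms by (intro span_mono) (auto simp: span_base)
qed

lemma config_rank_line:
  "w \<in> v ` I \<Longrightarrow> w \<noteq> 0 \<Longrightarrow> config_rank {i\<in>I. v i \<in> span {w}} v = 1"
  by (simp add: config_rank_def span_image_line real_vector.dim_span real_vector.dim_eq_card_independent)

lemma ex_first_positive_line:
  fixes v :: "'i \<Rightarrow> 'a::real_vector"
  assumes fin: "finite I" and pos: "0 < DD I v"
  obtains f p :: "'a \<Rightarrow> real" and w :: 'a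
  where "linear f" "signed_sum I v f = DD I v" "linear p" "w \<in> v ` I" "f w \<noteq> 0"
    "0 < signed_sum {i\<in>I. v i \<in> span {w}} v f"
    "\<forall>i\<in>I. v i \<notin> span {w} \<longrightarrow> f (v i) \<noteq> 0 \<and> p (v i) / f (v i) \<noteq> p w / f w"
    "(\<Sum>i\<in>{i\<in>I. v i \<notin> span {w} \<and> p (v i) / f (v i) < p w / f w}. int_sgn (f (v i))) \<le> 0"
proof -
  obtain f :: "'a \<Rightarrow> real"
    where f: "linear f" "signed_sum I v f = DD I v" "\<forall>i\<in>I. v i \<noteq> 0 \<longrightarrow> f (v i) \<noteq> 0"
    by (rule DD_attained_nonvanishing[OF fin])
  define U where "U = {i\<in>I. v i \<noteq> 0}"
  have U: "finite U" "\<forall>x\<in>v ` U. f x \<noteq> 0"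
    using fin f(3) by (auto simp: U_def)
  obtain p :: "'a \<Rightarrow> real" where p: "linear p"
    "\<forall>x\<in>v ` U. \<forall>y\<in>v ` U. p x / f x = p y / f y \<longleftrightarrow> y \<in> span {x}"
    by (rule ex_functional_separating_directions[OF finite_imageI[OF U(1)] f(1) U(2)])
  define \<rho> where "\<rho> i = p (v i) / f (v i)" for i
  have "0 < (\<Sum>i\<in>U. int_sgn (f (v i)))"
    using pos f(1,2) signed_sum_nonzero_vectors[OF fin f(1)] by (simp add: U_def signed_sum_def)
  then obtain c where c: "0 < (\<Sum>i\<in>{i\<in>U. \<rho> i = c}. int_sgn (f (v i)))"
    "(\<Sum>i\<in>{i\<in>U. \<rho> i < c}. int_sgn (f (v i))) \<le> 0"
    by (rule ex_least_positive_level[OF U(1)])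
  then have "{i\<in>U. \<rho> i = c} \<noteq> {}"
    by (metis less_irrefl sum.empty)
  then obtain i0 where i0: "i0 \<in> U" "\<rho> i0 = c"
    by blast
  define w where "w = v i0"
  have line_iff: "v i \<in> span {w} \<longleftrightarrow> \<rho> i = c" if "i \<in> U" for i
  proof -
    have "\<rho> i0 = \<rho> i \<longleftrightarrow> v i \<in> span {v i0}"
      using p(2) i0(1) that unfolding \<rho>_def by blast
    then show ?thesis
      using i0(2) by (auto simp: w_def)
  qed
  have "{i\<in>{i\<in>I. v i \<in> span {w}}. v i \<noteq> 0} = {i\<in>U. \<rho> i = c}"
    using line_iff by (auto simp: U_def)
  then have "signed_sum {i\<in>I. v i \<in> span {w}} v f = (\<Sum>i\<in>{i\<in>U. \<rho> i = c}. int_sgn (f (v i)))"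
    using signed_sum_nonzero_vectors[of "{i\<in>I. v i \<in> span {w}}" f v] fin f(1)
    by (simp add: signed_sum_def)
  then have positive: "0 < signed_sum {i\<in>I. v i \<in> span {w}} v f"
    using c(1) by simp
  have off_line: "i \<in> U \<and> \<rho> i \<noteq> c" if "i \<in> I" "v i \<notin> span {w}" for i
  proof -
    have "i \<in> U"
      using that span_zero[of "{w}"] by (auto simp: U_def)
    then show ?thesis
      using line_iff that(2) by blast
  qed
  then have "{i\<in>I. v i \<notin> span {w} \<and> \<rho> i < \<rho> i0} = {i\<in>U. \<rho> i < c}"
    using line_iff i0(2) by (auto simp: U_def)
  moreover have "\<forall>i\<in>I. v i \<notin> span {w} \<longrightarrow> f (v i) \<noteq> 0 \<and> \<rho> i \<noteq> \<rho> i0"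
    using off_line i0(2) U(2) by auto
  ultimately show thesis
    using positive c(2) i0(1) U(2) by (intro that[OF f(1,2) p(1)]) (auto simp: \<rho>_def w_def U_def)
qed

lemma ex_line_flat_DD_lower_bound:
  fixes v :: "'i \<Rightarrow> 'a::real_vector"
  assumes fin: "finite I" and pos: "0 < DD I v"
  obtains J where "config_rank J v = 1" "{i\<in>I. v i \<in> span (v ` J)} = J" "0 < DD J v"
    "DD I v \<le> DD J v + DD_quot I v J"
proof -
  obtain f p :: "'a \<Rightarrow> real" and w :: 'a
    where f: "linear f" "signed_sum I v f = DD I v" and p: "linear p" and w: "w \<in> v ` I" "f w \<noteq> 0"
      and line: "0 < signed_sum {i\<in>I. v i \<in> span {w}} v f"
      and off_line: "\<forall>i\<in>I. v i \<notin> span {w} \<longrightarrow> f (v i) \<noteq> 0 \<and> p (v i) / f (v i) \<noteq> p w / f w"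
      and swept: "(\<Sum>i\<in>{i\<in>I. v i \<notin> span {w} \<and> p (v i) / f (v i) < p w / f w}. int_sgn (f (v i))) \<le> 0"
    by (rule ex_first_positive_line[OF fin pos])
  define J where "J = {i\<in>I. v i \<in> span {w}}"
  have span_J: "span (v ` J) = span {w}"
    unfolding J_def using w(1) by (rule span_image_line)
  have flat: "{i\<in>I. v i \<in> span (v ` J)} = J"
    unfolding span_J by (simp add: J_def)
  have rank: "config_rank J v = 1"
    unfolding J_def using w linear_0[OF f(1)] by (intro config_rank_line) auto
  have "signed_sum J v f \<le> DD J v"
    using fin by (intro signed_sum_le_DD[OF _ f(1)]) (simp add: J_def)
  have "linear (\<lambda>x. p w / f w * f x)"
    using linear_compose_scale_right[OF f(1), of "p w / f w"] unfolding real_scaleR_def .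
  moreover have "p y = p w / f w * f y" if "y \<in> {w}" for y
    using that w(2) by simp
  ultimately have "p x = p w / f w * f x" if "x \<in> span (v ` J)" for x
    using that unfolding span_J by (rule linear_eq_on_span[OF p(1)])
  then have "\<forall>x\<in>span (v ` J). p x = p w / f w * f x"
    by blast
  moreover have "{i\<in>I - J. p (v i) / f (v i) < p w / f w} =
      {i\<in>I. v i \<notin> span {w} \<and> p (v i) / f (v i) < p w / f w}"
    by (auto simp: J_def)
  ultimately have "DD I v \<le> signed_sum J v f + DD_quot I v J"
    using off_line swept
    by (intro DD_le_signed_sum_plus_DD_quot[OF fin _ f(1,2) p(1), where c = "p w / f w"])
      (simp_all add: J_def)
  show thesis
  proof (rule that[OF rank flat])
    show "0 < DD J v" "DD I v \<le> DD J v + DD_quot I v J"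
      using \<open>DD I v \<le> _\<close> line \<open>signed_sum J v f \<le> DD J v\<close> unfolding J_def by linarith+
  qed
qed

theorem mainTheorem14:
  fixes I :: "'i set" and v :: "'i \<Rightarrow> 'a::real_vector"
  assumes "finite I"
    and "DD I v > 0"
  shows "\<exists>J. J \<subseteq> I \<and> config_rank J v = 1
           \<and> {i\<in>I. v i \<in> span (v ` J)} = J
           \<and> DD J v > 0
           \<and> DD I v = DD J v + DD_quot I v J"
proof -
  obtain J where J: "config_rank J v = 1" "{i\<in>I. v i \<in> span (v ` J)} = J" "0 < DD J v"
    "DD I v \<le> DD J v + DD_quot I v J"
    by (rule ex_line_flat_DD_lower_bound[OF assms])
  moreover have "DD J v + DD_quot I v J \<le> DD I v"
    by (rule DD_plus_DD_quot_le[OF assms(1) J(2)])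
  moreover have "J \<subseteq> I"
    using J(2) by blast
  ultimately show ?thesis
    by auto
qed

end
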